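(* Let $C$ be a correlator on $E$ with associated metric $(\cdot,\cdot)_C$ and tunneling maps $T_{x,y}$. Let $\mathcal O\subset M$ be a coordinate neighborhood with coordinates $(x^i)_{1\le i\le m}$ and let $\underline e=(e_\alpha)_{1\le\alpha\le r}$ be a $(\cdot,\cdot)_C$-orthonormal frame of $E|_{\mathcal O}$, viewed as a metric isomorphism $\underline{\mathbb R}^r_{\mathcal O}\to E|_{\mathcal O}$. Define $T(\underline e):\mathcal O\times\mathcal O\to\mathrm{End}(\mathbb R^r)$ by $T(\underline e)_{x,y}=\underline e(x)^{-1}T_{x,y}\underline e(y)$. Then for every $i=1,\dots,m$ and every $y\in\mathcal O$ the matrix $\partial_{x^i}T(\underline e)_{x,y}|_{x=y}$ is skew-symmetric.
   Context: $M$ is a smooth manifold of dimension $m$, $E\to M$ a smooth real vector bundle of rank $r$. A correlator on $E$ is a smooth section $C$ of $E\boxtimes E$ (bundle over $M\times M$ with fiber $E_x\otimes E_y$), identified with bilinear maps $C_{x,y}:E_x^*\times E_y^*\to\mathbb R$, which is symmetric ($C_{x,y}(u^*,v^* )=C_{y,x}(v^*,u^* )$) and nonnegative definite; here we assume $C$ is nondegenerate, i.e. each $C_{x,x}$ is positive definite. The correlator metric: $C_{x,x}$ is an inner product on $E_x^*$ and $(\cdot,\cdot)_C$ is the dual inner product on $E_x$. The tunneling map $T_{x,y}\in\mathrm{Hom}(E_y,E_x)$ is defined by $\langle u^*,T_{x,y}v\rangle=C_{x,y}(u^*,v^\flat)$ for $u^*\in E_x^*$, $v\in E_y$, where $v^\flat\in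 E_y^*$ is the metric dual of $v$ with respect to $(\cdot,\cdot)_C$. Then $T_{x,x}=\mathbb 1$ and $T_{y,x}=T_{x,y}^*$. *)

theory Defs
  imports "HOL-Analysis.Analysis"
begin

fun Ck_on :: "nat \<Rightarrow> 'a::real_normed_vector set \<Rightarrow> ('a \<Rightarrow> 'b::real_normed_vector) \<Rightarrow> bool" where
  "Ck_on 0 S f = continuous_on S f"
| "Ck_on (Suc k) S f =
     ((\<forall>x\<in>S. f differentiable (at x)) \<and>
      (\<forall>v. Ck_on k S (\<lambda>x. frechet_derivative f (at x) v)))"

definition smooth_on :: "'a::real_normed_vector set \<Rightarrow> ('a \<Rightarrow> 'b::real_normed_vector) \<Rightarrow> bool" where
  "smooth_on S f \<longleftrightarrow> (\<forall>k. Ck_on k S f)"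

text \<open>Over the coordinate neighbourhood U (an open subset of real^m,
  coordinates = components) the bundle E is trivialised by a smooth reference
  frame f_1..f_r, so E_x = real^r (coefficients w.r.t. f(x)) and
  E_x^* = real^r (coefficients w.r.t. the dual coframe), the pairing being the dot
  product. A correlator is then given by the matrix kernel
  K x y $ a $ b = C_{x,y}(f^a(x), f^b(y)), and the bilinear map is
  C_{x,y}(u, w) = u \<bullet> (K x y *v w).\<close>

definition corr_form :: "('p \<Rightarrow> 'p \<Rightarrow> real^'r^'r) \<Rightarrow> 'p \<Rightarrow> 'p \<Rightarrow> real^'r \<Rightarrow> real^'r \<Rightarrow> real" where
  "corr_form K x y u w = u \<bullet> (K x y *v w)"

definition is_correlator_on :: "'p::real_normed_vector set \<Rightarrow> ('p \<Rightarrow> 'p \<Rightarrow> real^'r^'r) \<Rightarrow> bool" where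
  "is_correlator_on U K \<longleftrightarrow>
     smooth_on (U \<times> U) (\<lambda>z. K (fst z) (snd z)) \<and>
     (\<forall>x\<in>U. \<forall>y\<in>U. \<forall>u w. corr_form K x y u w = corr_form K y x w u) \<and>
     (\<forall>n (xs :: nat \<Rightarrow> 'p) (us :: nat \<Rightarrow> real^'r). (\<forall>k<n. xs k \<in> U) \<longrightarrow>
        0 \<le> (\<Sum>k<n. \<Sum>l<n. corr_form K (xs k) (xs l) (us k) (us l)))"

definition nondegenerate_on :: "'p set \<Rightarrow> ('p \<Rightarrow> 'p \<Rightarrow> real^'r^'r) \<Rightarrow> bool" where
  "nondegenerate_on U K \<longleftrightarrow> (\<forall>x\<in>U. \<forall>u. u \<noteq> 0 \<longrightarrow> 0 < corr_form K x x u u)"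

text \<open>Metric dual (flat) w.r.t. the correlator metric: the correlator metric is the
  inner product on E_x dual to the inner product C_{x,x} on E_x^*; the flat map is
  the inverse of the sharp map u \<mapsto> C_{x,x}(u,-) (i.e. K x x *v u).\<close>
definition corr_flat :: "('p \<Rightarrow> 'p \<Rightarrow> real^'r^'r) \<Rightarrow> 'p \<Rightarrow> real^'r \<Rightarrow> real^'r" where
  "corr_flat K x v = matrix_inv (K x x) *v v"

definition corr_metric :: "('p \<Rightarrow> 'p \<Rightarrow> real^'r^'r) \<Rightarrow> 'p \<Rightarrow> real^'r \<Rightarrow> real^'r \<Rightarrow> real" where
  "corr_metric K x v w = corr_form K x x (corr_flat K x v) (corr_flat K x w)"

definition tunneling :: "('p \<Rightarrow> 'p \<Rightarrow> real^'r^'r) \<Rightarrow> 'p \<Rightarrow> 'p \<Rightarrow> real^'r^'r" where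
  "tunneling K x y = (THE T. \<forall>u v. u \<bullet> (T *v v) = corr_form K x y u (corr_flat K y v))"

text \<open>A local frame e of E|_O, given as the matrix whose column \<alpha> holds the
  coefficients of e_\<alpha>(x); orthonormal for the correlator metric.\<close>
definition orthonormal_frame_on :: "'p::real_normed_vector set \<Rightarrow> ('p \<Rightarrow> 'p \<Rightarrow> real^'r^'r) \<Rightarrow> ('p \<Rightarrow> real^'r^'r) \<Rightarrow> bool" where
  "orthonormal_frame_on U K e \<longleftrightarrow>
     smooth_on U e \<and>
     (\<forall>x\<in>U. invertible (e x) \<and>
        (\<forall>\<alpha> \<beta>. corr_metric K x (column \<alpha> (e x)) (column \<beta> (e x)) = (if \<alpha> = \<beta> then 1 else 0)))"

definition frame_tunneling :: "('p \<Rightarrow> 'p \<Rightarrow> real^'r^'r) \<Rightarrow> ('p \<Rightarrow> real^'r^'r) \<Rightarrow> 'p \<Rightarrow> 'p \<Rightarrow> real^'r^'r" where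
  "frame_tunneling K e x y = matrix_inv (e x) ** tunneling K x y ** e y"

end

theory Submission
  imports Defs
begin

(* In the local model the correlator is a matrix kernel K(x,y), the tunneling map is
   T_{x,y} = K(x,y) K(y,y)^-1, and orthonormality of the frame e means K(x,x) = e(x) e(x)^T.
   Hence T(e)_{x,y} = e(x)^-1 K(x,y) e(y)^-T =: Q(x,y), and Q satisfies Q(x,x) = 1 and
   Q(x,y)^T = Q(y,x).  Differentiating the first identity along the diagonal shows that the two
   partial derivatives of Q at (y,y) add up to zero; the second identity shows that they are
   transposes of each other.  So each partial derivative is skew-symmetric. *)

lemma matrix_inv_inverse:
  fixes A :: "real^'n^'n"
  assumes "invertible A"
  shows "A ** matrix_inv A = mat 1" "matrix_inv A ** A = mat 1"
  using someI_ex[OF assms[unfolded invertible_def]] unfolding matrix_inv_def by auto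

lemma matrix_diff_ldistrib: "(A::real^'n^'m) ** (B - C) = A ** B - A ** C"
  by (vector matrix_matrix_mult_def sum_subtractf[symmetric] field_simps)

lemma matrix_diff_rdistrib: "((A::real^'n^'m) - B) ** C = A ** C - B ** C"
  by (vector matrix_matrix_mult_def sum_subtractf[symmetric] field_simps)

lemma matrix_add_rdistrib: "((A::real^'n^'m) + B) ** C = A ** C + B ** C"
  by (vector matrix_matrix_mult_def sum.distrib[symmetric] field_simps)

lemma bounded_bilinear_matrix_mult:
  "bounded_bilinear ((**) :: real^'n^'m \<Rightarrow> real^'p^'n \<Rightarrow> real^'p^'m)"
  unfolding bilinear_conv_bounded_bilinear[symmetric] bilinear_def
  by (auto intro!: linearI simp: matrix_add_ldistrib matrix_add_rdistrib matrix_scalar_ac scalar_matrix_assoc)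

lemma bounded_linear_transpose: "bounded_linear (transpose :: real^'n^'m \<Rightarrow> real^'m^'n)"
  unfolding linear_conv_bounded_linear[symmetric]
  by (auto intro!: linearI simp: transpose_def vec_eq_iff)

lemma matrix_entry_as_form: "(M::real^'n^'m) $ i $ j = axis i 1 \<bullet> (M *v axis j 1)"
  by (simp add: matrix_vector_mult_basis column_def inner_axis')

lemma matrix_eq_if_forms_eq:
  fixes T T' :: "real^'n^'m"
  assumes "\<And>u v. u \<bullet> (T *v v) = u \<bullet> (T' *v v)"
  shows "T = T'"
  by (simp add: vec_eq_iff matrix_entry_as_form[of T] matrix_entry_as_form[of T'] assms)

lemma matrix_eq_transpose_if_forms_swap:
  fixes A B :: "real^'n^'n"
  assumes "\<And>u w. u \<bullet> (A *v w) = w \<bullet> (B *v u)"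
  shows "A = transpose B"
  by (simp add: vec_eq_iff transpose_def matrix_entry_as_form[of A] matrix_entry_as_form[of B] assms)

lemma invertible_if_positive_definite:
  fixes G :: "real^'n^'n"
  assumes "\<And>u. u \<noteq> 0 \<Longrightarrow> 0 < u \<bullet> (G *v u)"
  shows "invertible G"
proof -
  have "inj ((*v) G)"
  proof (rule injI)
    fix a b assume "G *v a = G *v b"
    then have "G *v (a - b) = 0" by (simp add: matrix_vector_mult_diff_distrib)
    then show "a = b" using assms[of "a - b"] by fastforce
  qed
  then obtain B where "B ** G = mat 1" using matrix_left_invertible_injective by blast
  then show ?thesis unfolding invertible_def using matrix_left_right_inverse by blast
qed

lemma gram_factorisation:
  fixes G E :: "real^'n^'n"
  assumes "invertible G" "invertible E"
    and orthonormal: "transpose E ** matrix_inv G ** E = mat 1"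
  shows "G = E ** transpose E"
proof -
  let ?Gi = "matrix_inv G" and ?Ei = "matrix_inv E"
  have transpose_inverse: "transpose ?Ei ** transpose E = mat 1"
    by (metis matrix_transpose_mul matrix_inv_inverse(1)[OF assms(2)] transpose_mat)
  have "?Gi = (transpose ?Ei ** transpose E) ** ?Gi ** (E ** ?Ei)"
    by (simp add: transpose_inverse matrix_inv_inverse[OF assms(2)])
  also have "\<dots> = transpose ?Ei ** (transpose E ** ?Gi ** E) ** ?Ei"
    by (simp add: matrix_mul_assoc)
  also have "\<dots> = transpose ?Ei ** ?Ei"
    by (simp add: orthonormal)
  finally have Gi: "?Gi = transpose ?Ei ** ?Ei" .
  have "E ** transpose E = G ** ?Gi ** E ** transpose E"
    by (simp add: matrix_inv_inverse[OF assms(1)])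
  also have "\<dots> = G ** transpose ?Ei ** (?Ei ** E) ** transpose E"
    by (simp add: Gi matrix_mul_assoc)
  also have "\<dots> = G ** (transpose ?Ei ** transpose E)"
    by (simp add: matrix_inv_inverse[OF assms(2)] matrix_mul_assoc)
  also have "\<dots> = G" by (simp add: transpose_inverse)
  finally show ?thesis by simp
qed

(* The determinant depends continuously on the matrix (it is a polynomial in the entries). *)
lemma isCont_det:
  fixes f :: "'a::t2_space \<Rightarrow> real^'n^'n"
  assumes "isCont f x"
  shows "isCont (\<lambda>y. det (f y)) x"
  unfolding det_def by (intro continuous_intros isCont_vec_nth assms)

lemma matrix_inv_entry_cramer:
  fixes A :: "real^'n^'n"
  assumes "invertible A"
  shows "matrix_inv A $ i $ j = det (\<chi> a b. if b = i then axis j 1 $ a else A $ a $ b) / det A"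
proof -
  have "A *v (matrix_inv A *v axis j 1) = axis j 1"
    by (simp add: matrix_vector_mul_assoc matrix_inv_inverse[OF assms])
  with cramer[of A] assms have "matrix_inv A *v axis j 1 =
      (\<chi> k. det (\<chi> a b. if b = k then axis j 1 $ a else A $ a $ b) / det A)"
    using invertible_det_nz by blast
  moreover have "(matrix_inv A *v axis j 1) $ i = matrix_inv A $ i $ j"
    by (simp add: matrix_vector_mult_basis column_def)
  ultimately show ?thesis by simp
qed

lemma eventually_invertible:
  fixes A :: "real^'n^'n"
  assumes "invertible A"
  shows "eventually invertible (nhds A)"
proof -
  have "open {X :: real^'n^'n. det X \<noteq> 0}"
    by (intro open_Collect_neq continuous_at_imp_continuous_on ballI isCont_det continuous_intros)
  with assms show ?thesis
    unfolding eventually_nhds invertible_det_nz by blast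
qed

(* Matrix inversion is continuous at invertible matrices, by Cramer's rule. *)
lemma isCont_matrix_inv:
  fixes A :: "real^'n^'n"
  assumes "invertible A"
  shows "isCont matrix_inv A"
  unfolding isCont_def
proof (intro vec_tendstoI)
  fix i j
  let ?cramer = "\<lambda>X::real^'n^'n. det (\<chi> a b. if b = i then axis j 1 $ a else X $ a $ b) / det X"
  have "isCont (\<lambda>X::real^'n^'n. \<chi> a b. if b = i then axis j 1 $ a else X $ a $ b) A"
    unfolding isCont_def
    by (intro tendsto_vec_lambda) (auto intro!: tendsto_vec_nth tendsto_ident_at)
  then have "isCont ?cramer A"
    using assms by (intro continuous_intros isCont_det) (auto simp: invertible_det_nz)
  moreover have "eventually (\<lambda>X. ?cramer X = matrix_inv X $ i $ j) (nhds A)"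
    using eventually_invertible[OF assms] by eventually_elim (simp add: matrix_inv_entry_cramer)
  ultimately show "((\<lambda>X. matrix_inv X $ i $ j) \<longlongrightarrow> matrix_inv A $ i $ j) (at A)"
    unfolding isCont_def using matrix_inv_entry_cramer[OF assms]
    by (auto intro: Lim_transform_eventually eventually_at_filter[THEN iffD2] simp: eventually_nhds_conv_at)
qed

(* Matrix inversion is differentiable at every invertible A with derivative H |-> - A^-1 H A^-1.
   The linearisation error equals (A^-1 - X^-1) (X - A) A^-1, which is o(|X - A|)
   by continuity of inversion. *)
lemma has_derivative_matrix_inv:
  fixes A :: "real^'n^'n"
  assumes "invertible A"
  shows "(matrix_inv has_derivative (\<lambda>H. - (matrix_inv A ** H ** matrix_inv A))) (at A)"
proof -
  let ?Ai = "matrix_inv A"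
  interpret mult: bounded_bilinear "(**) :: real^'n^'n \<Rightarrow> real^'n^'n \<Rightarrow> real^'n^'n"
    by (rule bounded_bilinear_matrix_mult)
  have lin: "bounded_linear (\<lambda>H. - (?Ai ** H ** ?Ai))"
    using bounded_linear_compose[OF mult.bounded_linear_left mult.bounded_linear_right]
    by (rule bounded_linear_minus)
  have remainder: "matrix_inv X - (?Ai - ?Ai ** (X - A) ** ?Ai) = (?Ai - matrix_inv X) ** (X - A) ** ?Ai"
    if "invertible X" for X
  proof -
    have "matrix_inv X ** (X - A) ** ?Ai = ?Ai - matrix_inv X"
      using matrix_inv_inverse[OF that] matrix_inv_inverse[OF assms]
      by (simp add: matrix_diff_ldistrib matrix_diff_rdistrib flip: matrix_mul_assoc)
    then show ?thesis by (simp add: matrix_diff_rdistrib)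
  qed
  have "Zfun (\<lambda>X. ?Ai - matrix_inv X) (at A)"
    using isCont_matrix_inv[OF assms] unfolding isCont_def tendsto_Zfun_iff
    by (simp add: Zfun_minus[of "\<lambda>X. matrix_inv X - ?Ai", simplified])
  moreover have "Bfun (\<lambda>X. (1 / norm (X - A)) *\<^sub>R (X - A)) (at A)"
    by (intro BfunI[where K=1] always_eventually) simp
  ultimately have "((\<lambda>X. (?Ai - matrix_inv X) ** ((1 / norm (X - A)) *\<^sub>R (X - A)) ** ?Ai) \<longlongrightarrow> 0) (at A)"
    unfolding tendsto_Zfun_iff by (simp add: mult.Zfun_left mult.Zfun_prod_Bfun)
  moreover have "eventually (\<lambda>X. (?Ai - matrix_inv X) ** ((1 / norm (X - A)) *\<^sub>R (X - A)) ** ?Ai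
      = (1 / norm (X - A)) *\<^sub>R (matrix_inv X - (?Ai - ?Ai ** (X - A) ** ?Ai))) (at A)"
    using eventually_invertible[OF assms] unfolding eventually_nhds_conv_at
    by (auto elim!: eventually_mono simp: remainder matrix_scalar_ac scalar_matrix_assoc)
  ultimately have "((\<lambda>X. (1 / norm (X - A)) *\<^sub>R (matrix_inv X - (?Ai - ?Ai ** (X - A) ** ?Ai))) \<longlongrightarrow> 0) (at A)"
    by (rule Lim_transform_eventually)
  with lin show ?thesis
    unfolding has_derivative_at2 by simp
qed

lemma directional_derivative:
  fixes f :: "'a::real_normed_vector \<Rightarrow> 'b::real_normed_vector"
  assumes "f differentiable (at x)"
  shows "((\<lambda>t. f (x + t *\<^sub>R v)) has_vector_derivative frechet_derivative f (at x) v) (at 0)"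
proof -
  let ?D = "frechet_derivative f (at x)"
  have line: "((\<lambda>t. x + t *\<^sub>R v) has_derivative (\<lambda>h. h *\<^sub>R v)) (at 0)"
    by (auto intro!: derivative_eq_intros)
  have "(f has_derivative ?D) (at (x + 0 *\<^sub>R v))"
    using assms by (simp add: frechet_derivative_works)
  from has_derivative_compose[OF line this] have "((\<lambda>t. f (x + t *\<^sub>R v)) has_derivative (\<lambda>h. ?D (h *\<^sub>R v))) (at 0)"
    by (simp add: o_def)
  moreover have "linear ?D"
    using assms by (simp add: frechet_derivative_works has_derivative_linear)
  ultimately show ?thesis
    unfolding has_vector_derivative_def by (simp add: linear_scale)
qed

lemma differentiable_matrix_mult:
  fixes f :: "'a::real_normed_vector \<Rightarrow> real^'n^'m" and g :: "'a \<Rightarrow> real^'p^'n"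
  assumes "f differentiable (at x)" "g differentiable (at x)"
  shows "(\<lambda>z. f z ** g z) differentiable (at x)"
  using assms bounded_bilinear.FDERIV[OF bounded_bilinear_matrix_mult]
  unfolding differentiable_def by blast

lemma skew_derivative_of_symmetric_kernel:
  fixes Q :: "'a::real_normed_vector \<times> 'a \<Rightarrow> real^'n^'n"
  assumes diff: "Q differentiable (at (y, y))"
    and S: "open S" "y \<in> S"
    and diagonal: "\<And>x. x \<in> S \<Longrightarrow> Q (x, x) = Q (y, y)"
    and symmetric: "\<And>x. x \<in> S \<Longrightarrow> transpose (Q (x, y)) = Q (y, x)"
  defines "D \<equiv> frechet_derivative Q (at (y, y))"
  shows "transpose (D (v, 0)) = - D (v, 0)"
proof -
  define T where "T = {t. y + t *\<^sub>R v \<in> S}"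
  have T: "open T" "0 \<in> T"
    using S unfolding T_def by (auto intro!: open_vimage continuous_intros simp: vimage_def[symmetric])
  have line: "((\<lambda>t. Q ((y, y) + t *\<^sub>R w)) has_vector_derivative D w) (at 0)" for w
    unfolding D_def by (rule directional_derivative[OF diff])
  \<comment> \<open>along the diagonal \<open>Q\<close> is constant, so the derivative in direction \<open>(v, v)\<close> vanishes\<close>
  have "((\<lambda>t. Q ((y, y) + t *\<^sub>R (v, v))) has_vector_derivative 0) (at 0)"
    by (rule has_vector_derivative_transform_within_open[OF has_vector_derivative_const T])
       (simp add: T_def diagonal)
  then have diag0: "D (v, v) = 0"
    using line vector_derivative_unique_at by blast
  have "((\<lambda>t. transpose (Q ((y, y) + t *\<^sub>R (v, 0)))) has_vector_derivative transpose (D (v, 0))) (at 0)"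
    by (rule bounded_linear.has_vector_derivative[OF bounded_linear_transpose line])
  then have "((\<lambda>t. Q ((y, y) + t *\<^sub>R (0, v))) has_vector_derivative transpose (D (v, 0))) (at 0)"
    by (rule has_vector_derivative_transform_within_open[OF _ T]) (simp add: T_def symmetric)
  then have second: "D (0, v) = transpose (D (v, 0))"
    using line vector_derivative_unique_at by blast
  have "linear D"
    using diff unfolding D_def by (simp add: frechet_derivative_works has_derivative_linear)
  then have "D (v, v) = D (v, 0) + D (0, v)"
    by (metis add_Pair add.right_neutral add.left_neutral linear_add)
  with diag0 second show ?thesis
    by (simp add: eq_neg_iff_add_eq_0 add.commute)
qed

lemma smooth_on_differentiable: "smooth_on S f \<Longrightarrow> x \<in> S \<Longrightarrow> f differentiable (at x)"
  unfolding smooth_on_def by (metis Ck_on.simps(2))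

lemma correlator_metric_eq:
  assumes "invertible (K x x)"
  shows "corr_metric K x v w = (matrix_inv (K x x) *v v) \<bullet> w"
  by (simp add: corr_metric_def corr_form_def corr_flat_def matrix_vector_mul_assoc
      matrix_inv_inverse[OF assms])

lemma orthonormal_frame_gram:
  assumes frame: "orthonormal_frame_on U K e" and "x \<in> U" and G: "invertible (K x x)"
  shows "K x x = e x ** transpose (e x)"
proof (rule gram_factorisation[OF G])
  let ?Gi = "matrix_inv (K x x)" and ?E = "e x"
  show "invertible ?E"
    using frame \<open>x \<in> U\<close> unfolding orthonormal_frame_on_def by blast
  have "(transpose ?E ** ?Gi ** ?E) $ b $ a = corr_metric K x (column a ?E) (column b ?E)" for a b
    unfolding correlator_metric_eq[where K=K, OF G]
    by (simp add: matrix_matrix_mult_def matrix_vector_mult_def column_def inner_vec_def transpose_def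
        sum_distrib_left sum_distrib_right mult_ac) (subst sum.swap, simp add: mult_ac)
  then show "transpose ?E ** ?Gi ** ?E = mat 1"
    using frame \<open>x \<in> U\<close> unfolding orthonormal_frame_on_def by (simp add: vec_eq_iff mat_def)
qed

lemma tunneling_formula:
  assumes "invertible (K y y)"
  shows "tunneling K x y = K x y ** matrix_inv (K y y)"
  unfolding tunneling_def
proof (rule the_equality)
  show "\<forall>u v. u \<bullet> ((K x y ** matrix_inv (K y y)) *v v) = corr_form K x y u (corr_flat K y v)"
    by (simp add: corr_form_def corr_flat_def matrix_vector_mul_assoc)
  fix T assume "\<forall>u v. u \<bullet> (T *v v) = corr_form K x y u (corr_flat K y v)"
  then show "T = K x y ** matrix_inv (K y y)"
    by (intro matrix_eq_if_forms_eq) (simp add: corr_form_def corr_flat_def matrix_vector_mul_assoc)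
qed

definition frame_correlator :: "('p \<Rightarrow> 'p \<Rightarrow> real^'r^'r) \<Rightarrow> ('p \<Rightarrow> real^'r^'r) \<Rightarrow> 'p \<Rightarrow> 'p \<Rightarrow> real^'r^'r" where
  "frame_correlator K e x y = matrix_inv (e x) ** K x y ** transpose (matrix_inv (e y))"

lemma frame_tunneling_eq_frame_correlator:
  assumes "invertible (K y y)" "invertible (e y)" and gram: "K y y = e y ** transpose (e y)"
  shows "frame_tunneling K e x y = frame_correlator K e x y"
proof -
  let ?Gi = "matrix_inv (K y y)" and ?Ei = "matrix_inv (e y)"
  have "transpose (e y) ** transpose ?Ei = mat 1"
    by (metis matrix_transpose_mul matrix_inv_inverse(2)[OF assms(2)] transpose_mat)
  then have "?Gi ** e y = ?Gi ** (e y ** transpose (e y)) ** transpose ?Ei"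
    by (simp flip: matrix_mul_assoc)
  also have "\<dots> = transpose ?Ei"
    by (simp add: matrix_inv_inverse(2)[OF assms(1)] flip: gram)
  finally show ?thesis
    by (simp add: frame_tunneling_def frame_correlator_def tunneling_formula[where K=K, OF assms(1)]
        matrix_mul_assoc[symmetric])
qed

lemma frame_correlator_diagonal:
  assumes "invertible (e x)" and gram: "K x x = e x ** transpose (e x)"
  shows "frame_correlator K e x x = mat 1"
proof -
  have "frame_correlator K e x x = (matrix_inv (e x) ** e x) ** transpose (matrix_inv (e x) ** e x)"
    by (simp add: frame_correlator_def gram matrix_transpose_mul matrix_mul_assoc)
  then show ?thesis by (simp add: matrix_inv_inverse[OF assms(1)])
qed

lemma frame_correlator_transpose:
  assumes "K y x = transpose (K x y)"
  shows "transpose (frame_correlator K e x y) = frame_correlator K e y x"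
  by (simp add: frame_correlator_def matrix_transpose_mul assms matrix_mul_assoc)

lemma frame_correlator_differentiable:
  fixes K :: "'p::real_normed_vector \<Rightarrow> 'p \<Rightarrow> real^'r^'r"
  assumes "(\<lambda>z. K (fst z) (snd z)) differentiable (at (x, y))"
    and "e differentiable (at x)" "e differentiable (at y)" "invertible (e x)" "invertible (e y)"
  shows "(\<lambda>z. frame_correlator K e (fst z) (snd z)) differentiable (at (x, y))"
proof -
  have inverse: "(\<lambda>p. matrix_inv (e p)) differentiable (at p)"
    if "e differentiable (at p)" "invertible (e p)" for p
  proof -
    have "matrix_inv differentiable (at (e p))"
      using has_derivative_matrix_inv[OF that(2)] unfolding differentiable_def by blast
    from differentiable_chain_at[OF that(1) this] show ?thesis by (simp add: o_def)
  qed
  have fst: "fst differentiable (at (x, y))" and snd: "snd differentiable (at (x, y))"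
    by (simp_all add: bounded_linear_fst bounded_linear_snd bounded_linear_imp_differentiable)
  have left: "(\<lambda>z. matrix_inv (e (fst z))) differentiable (at (x, y))"
    using differentiable_chain_at[OF fst, of "\<lambda>p. matrix_inv (e p)"] inverse[OF assms(2,4)]
    by (simp add: o_def)
  have right: "(\<lambda>z. transpose (matrix_inv (e (snd z)))) differentiable (at (x, y))"
    using differentiable_chain_at[OF snd, of "\<lambda>p. matrix_inv (e p)"] inverse[OF assms(3,5)]
      differentiable_chain_at[OF _ bounded_linear_imp_differentiable[OF bounded_linear_transpose]]
    by (simp add: o_def)
  show ?thesis
    unfolding frame_correlator_def
    by (intro differentiable_matrix_mult left right assms(1))
qed

lemma frame_correlator_properties:
  fixes K :: "'p::real_normed_vector \<Rightarrow> 'p \<Rightarrow> real^'r^'r"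
  assumes correlator: "is_correlator_on U K" and nondegenerate: "nondegenerate_on U K"
    and frame: "orthonormal_frame_on U K e" and "x \<in> U" "y \<in> U"
  shows "frame_correlator K e x x = mat 1"
    and "transpose (frame_correlator K e x y) = frame_correlator K e y x"
    and "frame_tunneling K e z y = frame_correlator K e z y"
    and "(\<lambda>z. frame_correlator K e (fst z) (snd z)) differentiable (at (x, y))"
proof -
  have G: "invertible (K p p)" if "p \<in> U" for p
    using nondegenerate that unfolding nondegenerate_on_def corr_form_def
    by (intro invertible_if_positive_definite) auto
  have E: "invertible (e p)" "e differentiable (at p)" if "p \<in> U" for p
    using frame that unfolding orthonormal_frame_on_def by (auto intro: smooth_on_differentiable)
  have gram: "K p p = e p ** transpose (e p)" if "p \<in> U" for p
    by (rule orthonormal_frame_gram[OF frame that G[OF that]])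
  show "frame_correlator K e x x = mat 1"
    using frame_correlator_diagonal[where K=K and e=e] E(1) gram \<open>x \<in> U\<close> by blast
  have "K y x = transpose (K x y)"
    using correlator \<open>x \<in> U\<close> \<open>y \<in> U\<close> unfolding is_correlator_on_def corr_form_def
    by (intro matrix_eq_transpose_if_forms_swap) auto
  then show "transpose (frame_correlator K e x y) = frame_correlator K e y x"
    by (rule frame_correlator_transpose)
  show "frame_tunneling K e z y = frame_correlator K e z y"
    using frame_tunneling_eq_frame_correlator[where K=K and e=e] G E(1) gram \<open>y \<in> U\<close> by blast
  show "(\<lambda>z. frame_correlator K e (fst z) (snd z)) differentiable (at (x, y))"
  proof (rule frame_correlator_differentiable)
    show "(\<lambda>z. K (fst z) (snd z)) differentiable (at (x, y))"
      using correlator \<open>x \<in> U\<close> \<open>y \<in> U\<close> unfolding is_correlator_on_def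
      by (auto intro: smooth_on_differentiable)
  qed (use E \<open>x \<in> U\<close> \<open>y \<in> U\<close> in auto)
qed

theorem mainTheorem5:
  fixes U :: "(real^'m) set"
    and K :: "real^'m \<Rightarrow> real^'m \<Rightarrow> real^'r^'r"
    and e :: "real^'m \<Rightarrow> real^'r^'r"
  assumes "open U"
    and "is_correlator_on U K"
    and "nondegenerate_on U K"
    and "orthonormal_frame_on U K e"
  shows "\<forall>i y. y \<in> U \<longrightarrow>
           (\<exists>P. ((\<lambda>t. frame_tunneling K e (y + t *\<^sub>R axis i 1) y) has_vector_derivative P) (at 0)
                \<and> transpose P = - P)"
proof (intro allI impI)
  fix i y assume "y \<in> U"
  note properties = frame_correlator_properties[OF assms(2-4)]
  let ?Q = "\<lambda>z. frame_correlator K e (fst z) (snd z)"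
  have diff: "?Q differentiable (at (y, y))"
    using properties(4) \<open>y \<in> U\<close> by blast
  define P where "P = frechet_derivative ?Q (at (y, y)) (axis i 1, 0)"
  have "transpose P = - P"
    unfolding P_def using \<open>y \<in> U\<close>
    by (intro skew_derivative_of_symmetric_kernel[OF diff assms(1)]) (simp_all add: properties(1,2))
  moreover have "((\<lambda>t. frame_tunneling K e (y + t *\<^sub>R axis i 1) y) has_vector_derivative P) (at 0)"
    using directional_derivative[OF diff, of "(axis i 1, 0)"] \<open>y \<in> U\<close>
    by (simp add: P_def properties(3))
  ultimately show "\<exists>P. ((\<lambda>t. frame_tunneling K e (y + t *\<^sub>R axis i 1) y) has_vector_derivative P) (at 0)
                \<and> transpose P = - P"
    by blast
qed

end
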